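(* Let $f$ be a biderivation of $\mathcal{SV}(0)$, and let $\phi,\psi:\mathcal{SV}(0)\to\mathcal{SV}(0)$ be linear maps and $\rho_1,\rho_2,\rho_3,\theta_1,\theta_2,\theta_3$ linear complex-valued functions on $\mathcal{SV}(0)$ such that for all $x,y$, $$f(x,y)=\sum_{i=1}^3\rho_i(x)D_i(y)+[\phi(x),y]=\sum_{i=1}^3\theta_i(y)D_i(x)+[x,\psi(y)].$$ Let $\lambda\in\mathbb{C}$ be such that $\phi(L_m)-\lambda L_m\in\mathfrak{M}$ and $\psi(L_m)-\lambda L_m\in\mathfrak{M}$ for all $m\in\mathbb{Z}$ (such $\lambda$ exists). Then for every $n\in\mathbb{Z}$ there are $c_0^{(n)},r_0^{(n)}\in\mathbb{C}$ with $$\phi(Y_n)=\lambda Y_n+c_0^{(n)}M_0,\qquad \psi(Y_n)=\lambda Y_n+r_0^{(n)}M_0,$$ and moreover $\rho_i(Y_n)=\theta_i(Y_n)=0$ for $i=1,2,3$ and $\rho_3(L_n)=\theta_3(L_n)=0$, for all $n\in\mathbb{Z}$.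
   Context: $\mathcal{SV}(0)$ is the complex Lie algebra with basis $\{L_i,Y_i,M_i\mid i\in\mathbb{Z}\}$ and brackets $[L_m,L_n]=(m-n)L_{m+n}$, $[L_m,Y_n]=(\frac12 m-n)Y_{m+n}$, $[L_m,M_n]=-nM_{m+n}$, $[Y_m,Y_n]=(m-n)M_{m+n}$, $[Y_m,M_n]=[M_m,M_n]=0$; $\mathfrak{M}=\bigoplus_{i\in\mathbb{Z}}\mathbb{C}M_i$. A biderivation of a Lie algebra $L$ is a bilinear map $f:L\times L\to L$ with $f([x,y],z)=[x,f(y,z)]+[f(x,z),y]$ and $f(x,[y,z])=[f(x,y),z]+[y,f(x,z)]$ for all $x,y,z\in L$. The linear maps $D_1,D_2,D_3$ are defined by $D_1(L_m)=M_m$, $D_1(Y_m)=D_1(M_m)=0$; $D_2(L_m)=mM_m$, $D_2(Y_m)=D_2(M_m)=0$; $D_3(L_m)=0$, $D_3(Y_m)=Y_m$, $D_3(M_m)=2M_m$. *)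

theory Defs
  imports Complex_Main
begin

text \<open>The Lie algebra SV(0): elements are finitely supported complex coefficient
 functions on the basis {L_i, Y_i, M_i | i \<in> Z}.\<close>

datatype gen = L int | Y int | M int

type_synonym sv = "gen \<Rightarrow> complex"

definition SV :: "sv set" where
  "SV = {x. finite {g. x g \<noteq> 0}}"

definition vadd :: "sv \<Rightarrow> sv \<Rightarrow> sv" where
  "vadd x y = (\<lambda>g. x g + y g)"

definition vsc :: "complex \<Rightarrow> sv \<Rightarrow> sv" where
  "vsc c x = (\<lambda>g. c * x g)"

definition vzero :: sv where
  "vzero = (\<lambda>g. 0)"

definition bas :: "gen \<Rightarrow> sv" where
  "bas g = (\<lambda>h. if h = g then 1 else 0)"

fun brb :: "gen \<Rightarrow> gen \<Rightarrow> sv" where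
  "brb (L m) (L n) = vsc (of_int (m - n)) (bas (L (m + n)))"
| "brb (L m) (Y n) = vsc (of_int m / 2 - of_int n) (bas (Y (m + n)))"
| "brb (L m) (M n) = vsc (- of_int n) (bas (M (m + n)))"
| "brb (Y m) (L n) = vsc (of_int m - of_int n / 2) (bas (Y (m + n)))"
| "brb (Y m) (Y n) = vsc (of_int (m - n)) (bas (M (m + n)))"
| "brb (Y m) (M n) = vzero"
| "brb (M m) (L n) = vsc (of_int m) (bas (M (m + n)))"
| "brb (M m) (Y n) = vzero"
| "brb (M m) (M n) = vzero"

definition br :: "sv \<Rightarrow> sv \<Rightarrow> sv" where
  "br x y = (\<lambda>g. \<Sum>a\<in>{a. x a \<noteq> 0}. \<Sum>b\<in>{b. y b \<noteq> 0}. x a * y b * brb a b g)"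

definition Mfrak :: "sv set" where
  "Mfrak = {x \<in> SV. \<forall>m. x (L m) = 0 \<and> x (Y m) = 0}"

definition lin_map :: "(sv \<Rightarrow> sv) \<Rightarrow> bool" where
  "lin_map \<phi> \<longleftrightarrow> (\<forall>x\<in>SV. \<phi> x \<in> SV) \<and>
     (\<forall>x\<in>SV. \<forall>y\<in>SV. \<phi> (vadd x y) = vadd (\<phi> x) (\<phi> y)) \<and>
     (\<forall>c. \<forall>x\<in>SV. \<phi> (vsc c x) = vsc c (\<phi> x))"

definition lin_fun :: "(sv \<Rightarrow> complex) \<Rightarrow> bool" where
  "lin_fun \<rho> \<longleftrightarrow>
     (\<forall>x\<in>SV. \<forall>y\<in>SV. \<rho> (vadd x y) = \<rho> x + \<rho> y) \<and>
     (\<forall>c. \<forall>x\<in>SV. \<rho> (vsc c x) = c * \<rho> x)"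

definition bilin_map :: "(sv \<Rightarrow> sv \<Rightarrow> sv) \<Rightarrow> bool" where
  "bilin_map f \<longleftrightarrow> (\<forall>x\<in>SV. lin_map (f x)) \<and> (\<forall>y\<in>SV. lin_map (\<lambda>x. f x y))"

definition biderivation :: "(sv \<Rightarrow> sv \<Rightarrow> sv) \<Rightarrow> bool" where
  "biderivation f \<longleftrightarrow> bilin_map f \<and>
     (\<forall>x\<in>SV. \<forall>y\<in>SV. \<forall>z\<in>SV.
        f (br x y) z = vadd (br x (f y z)) (br (f x z) y) \<and>
        f x (br y z) = vadd (br (f x y) z) (br y (f x z)))"

definition D1 :: "sv \<Rightarrow> sv" where
  "D1 x = (\<lambda>g. case g of M m \<Rightarrow> x (L m) | _ \<Rightarrow> 0)"

definition D2 :: "sv \<Rightarrow> sv" where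
  "D2 x = (\<lambda>g. case g of M m \<Rightarrow> of_int m * x (L m) | _ \<Rightarrow> 0)"

definition D3 :: "sv \<Rightarrow> sv" where
  "D3 x = (\<lambda>g. case g of L m \<Rightarrow> 0 | Y m \<Rightarrow> x (Y m) | M m \<Rightarrow> 2 * x (M m))"

end

(* Evaluate the identity rho(x) D(y) + [phi x, y] = theta(y) D(x) + [x, psi y] at x = L_m,
   y = Y_n and compare the L_j-, Y_j- and M_j-coordinates.  As phi(L_m) is lambda L_m modulo
   the M-part, this forces the L-coordinates of psi(Y_n) to vanish, its Y-coordinates to be
   those of lambda Y_n, its M_k-coordinates with k <> 0 to vanish, and rho3(L_m) =
   theta1(Y_n) = theta2(Y_n) = 0.  Antisymmetry of the bracket exchanges the roles of
   (phi, rho) and (psi, theta), which gives the same for phi.  Finally x = Y_n, y = Y_(n+1)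
   at the coordinate Y_(n+1) yields rho3(Y_n) = theta3(Y_n) = 0. *)

theory Submission
  imports Defs
begin

lemma bas_SV [simp]: "bas g \<in> SV"
  by (simp add: SV_def bas_def)

lemma bas_apply: "bas g h = (if h = g then 1 else 0)"
  by (simp add: bas_def)

lemma vsc_SV [simp]: "x \<in> SV \<Longrightarrow> vsc c x \<in> SV"
  by (auto simp: SV_def vsc_def elim: finite_subset[rotated])

lemma brb_antisym: "brb b a g = - brb a b g"
  by (cases a; cases b) (auto simp: vsc_def vzero_def bas_def algebra_simps)

lemma br_antisym:
  assumes "x \<in> SV" "y \<in> SV"
  shows "br y x g = - br x y g"
proof -
  have "br y x g = (\<Sum>b\<in>{b. y b \<noteq> 0}. \<Sum>a\<in>{a. x a \<noteq> 0}. - (x a * y b * brb a b g))"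
    unfolding br_def by (intro sum.cong refl) (subst brb_antisym, simp)
  also have "\<dots> = - br x y g"
    using assms unfolding br_def SV_def by (subst sum.swap) (simp add: sum_negf)
  finally show ?thesis .
qed

lemma br_vsc_left: "br (vsc c x) y = vsc c (br x y)"
proof (cases "c = 0")
  case False
  then show ?thesis
    by (auto simp: br_def vsc_def sum_distrib_left mult_ac intro!: sum.cong)
qed (simp add: br_def vsc_def)

lemma all_gen: "(\<forall>b. P b) \<longleftrightarrow> (\<forall>i. P (L i) \<and> P (Y i) \<and> P (M i))"
  by (metis gen.exhaust)

lemma br_bas_single_term:
  assumes "y \<in> SV" "\<forall>b. b \<noteq> c \<longrightarrow> brb a b g = 0"
  shows "br (bas a) y g = y c * brb a c g"
proof -
  have "br (bas a) y g = (\<Sum>b\<in>{b. y b \<noteq> 0}. y b * brb a b g)"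
    by (simp add: br_def bas_def)
  also have "\<dots> = (\<Sum>b\<in>{b. y b \<noteq> 0}. if b = c then y c * brb a c g else 0)"
    using assms(2) by (intro sum.cong) auto
  also have "\<dots> = y c * brb a c g"
    using assms(1) by (simp add: SV_def)
  finally show ?thesis .
qed

lemma br_L_apply_L:
  "y \<in> SV \<Longrightarrow> br (bas (L m)) y (L j) = of_int (2 * m - j) * y (L (j - m))"
  by (subst br_bas_single_term[where c = "L (j - m)"]) (auto simp: bas_def vsc_def vzero_def all_gen)

lemma br_L_apply_Y:
  "y \<in> SV \<Longrightarrow> br (bas (L m)) y (Y j) = (of_int m / 2 - of_int (j - m)) * y (Y (j - m))"
  by (subst br_bas_single_term[where c = "Y (j - m)"]) (auto simp: bas_def vsc_def vzero_def all_gen)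

lemma br_L_apply_M:
  "y \<in> SV \<Longrightarrow> br (bas (L m)) y (M j) = - of_int (j - m) * y (M (j - m))"
  by (subst br_bas_single_term[where c = "M (j - m)"]) (auto simp: bas_def vsc_def vzero_def all_gen)

lemma br_Y_apply_L: "y \<in> SV \<Longrightarrow> br (bas (Y m)) y (L j) = 0"
  by (subst br_bas_single_term[where c = "L (j - m)"]) (auto simp: bas_def vsc_def vzero_def all_gen)

lemma br_Y_apply_Y:
  "y \<in> SV \<Longrightarrow> br (bas (Y m)) y (Y j) = (of_int m - of_int (j - m) / 2) * y (L (j - m))"
  by (subst br_bas_single_term[where c = "L (j - m)"]) (auto simp: bas_def vsc_def vzero_def all_gen)

lemma br_Y_apply_M:
  "y \<in> SV \<Longrightarrow> br (bas (Y m)) y (M j) = of_int (2 * m - j) * y (Y (j - m))"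
  by (subst br_bas_single_term[where c = "Y (j - m)"]) (auto simp: bas_def vsc_def vzero_def all_gen)

(* Loops as a simp rule on the bracket of two basis vectors. *)
lemma br_right_bas: "x \<in> SV \<Longrightarrow> br x (bas b) g = - br (bas b) x g"
  by (rule br_antisym) simp_all

lemma D_bas_apply:
  "D1 (bas (Y n)) g = 0" "D2 (bas (Y n)) g = 0" "D3 (bas (L n)) g = 0"
  "D1 (bas (L m)) (L j) = 0" "D1 (bas (L m)) (Y j) = 0" "D1 (bas (L m)) (M j) = (if j = m then 1 else 0)"
  "D2 (bas (L m)) (L j) = 0" "D2 (bas (L m)) (Y j) = 0" "D2 (bas (L m)) (M j) = (if j = m then of_int m else 0)"
  "D3 (bas (Y m)) (L j) = 0" "D3 (bas (Y m)) (Y j) = (if j = m then 1 else 0)" "D3 (bas (Y m)) (M j) = 0"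
  by (auto simp: D1_def D2_def D3_def bas_def split: gen.split)

lemma half_of_int_diff_eq_0_iff: "(of_int m / 2 - of_int k :: complex) = 0 \<longleftrightarrow> m = 2 * k"
proof -
  have "(of_int m / 2 - of_int k :: complex) = of_int (m - 2 * k) / 2"
    by (simp add: field_simps)
  also have "\<dots> = 0 \<longleftrightarrow> m - 2 * k = 0"
    by (simp only: divide_eq_0_iff of_int_eq_0_iff) simp
  finally show ?thesis by simp
qed

locale two_sided_decomposition =
  fixes \<phi> \<psi> :: "sv \<Rightarrow> sv" and \<rho>1 \<rho>2 \<rho>3 \<theta>1 \<theta>2 \<theta>3 :: "sv \<Rightarrow> complex"
  assumes phi_SV: "x \<in> SV \<Longrightarrow> \<phi> x \<in> SV"
    and psi_SV: "y \<in> SV \<Longrightarrow> \<psi> y \<in> SV"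
    and decomposition: "x \<in> SV \<Longrightarrow> y \<in> SV \<Longrightarrow>
      \<rho>1 x * D1 y g + \<rho>2 x * D2 y g + \<rho>3 x * D3 y g + br (\<phi> x) y g =
      \<theta>1 y * D1 x g + \<theta>2 y * D2 x g + \<theta>3 y * D3 x g + br x (\<psi> y) g"
begin

(* By antisymmetry of the bracket; it turns every result about psi into one about phi. *)
lemma swap:
  "two_sided_decomposition (\<lambda>x. vsc (- 1) (\<psi> x)) (\<lambda>y. vsc (- 1) (\<phi> y))
     \<theta>1 \<theta>2 \<theta>3 \<rho>1 \<rho>2 \<rho>3"
proof (rule two_sided_decomposition.intro)
  show "vsc (- 1) (\<psi> x) \<in> SV" if "x \<in> SV" for x
    using that by (simp add: psi_SV)
  show "vsc (- 1) (\<phi> y) \<in> SV" if "y \<in> SV" for y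
    using that by (simp add: phi_SV)
  fix x y g
  assume xy: "x \<in> SV" "y \<in> SV"
  have neg_psi: "br (vsc (- 1) (\<psi> x)) y g = br y (\<psi> x) g"
    unfolding br_vsc_left by (simp add: vsc_def br_antisym[OF psi_SV[OF xy(1)] xy(2)])
  have "br x (vsc (- 1) (\<phi> y)) g = - br (vsc (- 1) (\<phi> y)) x g"
    using xy by (intro br_antisym) (simp_all add: phi_SV)
  also have "\<dots> = br (\<phi> y) x g"
    unfolding br_vsc_left by (simp add: vsc_def)
  finally have neg_phi: "br x (vsc (- 1) (\<phi> y)) g = br (\<phi> y) x g" .
  show "\<theta>1 x * D1 y g + \<theta>2 x * D2 y g + \<theta>3 x * D3 y g + br (vsc (- 1) (\<psi> x)) y g =
      \<rho>1 y * D1 x g + \<rho>2 y * D2 x g + \<rho>3 y * D3 x g + br x (vsc (- 1) (\<phi> y)) g"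
    unfolding neg_psi neg_phi by (rule decomposition[OF xy(2,1), symmetric])
qed

lemmas br_bas_apply =
  br_right_bas br_L_apply_L br_L_apply_Y br_L_apply_M br_Y_apply_L br_Y_apply_Y br_Y_apply_M

context
  fixes lam :: complex
  assumes phi_L_L: "\<And>m k. \<phi> (bas (L m)) (L k) = (if k = m then lam else 0)"
    and phi_L_Y: "\<And>m k. \<phi> (bas (L m)) (Y k) = 0"
begin

lemma psi_Y_at_L: "\<psi> (bas (Y n)) (L k) = 0"
  using decomposition[of "bas (L (k + 1))" "bas (Y n)" "L (2 * k + 1)"]
  by (simp add: D_bas_apply br_bas_apply phi_SV psi_SV)

lemma decomposition_L_Y_at_Y:
  "\<rho>3 (bas (L m)) * (if j = n then 1 else 0)
     + (of_int (j - n) / 2 - of_int n) * (if j = m + n then lam else 0)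
   = (of_int m / 2 - of_int (j - m)) * \<psi> (bas (Y n)) (Y (j - m))"
  using decomposition[of "bas (L m)" "bas (Y n)" "Y j"]
  by (simp add: D_bas_apply br_bas_apply phi_SV psi_SV phi_L_L algebra_simps)

lemma decomposition_L_Y_at_M:
  "\<theta>1 (bas (Y n)) * (if j = m then 1 else 0)
     + \<theta>2 (bas (Y n)) * (if j = m then of_int m else 0)
   = of_int (j - m) * \<psi> (bas (Y n)) (M (j - m))"
  using decomposition[of "bas (L m)" "bas (Y n)" "M j"]
  by (simp add: D_bas_apply br_bas_apply phi_SV psi_SV phi_L_Y algebra_simps)

lemma psi_Y_at_Y: "\<psi> (bas (Y n)) (Y k) = (if k = n then lam else 0)"
proof -
  define m where "m = \<bar>n - k\<bar> + 2 * \<bar>k\<bar> + 1"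
  have "m + k \<noteq> n" "m \<noteq> 2 * k" unfolding m_def by arith+
  then have "(of_int m / 2 - of_int k) * \<psi> (bas (Y n)) (Y k)
      = (of_int m / 2 - of_int k) * (if k = n then lam else 0)"
    using decomposition_L_Y_at_Y[where m = m and j = "m + k" and n = n]
    by (auto simp: algebra_simps)
  moreover have "(of_int m / 2 - of_int k :: complex) \<noteq> 0"
    using \<open>m \<noteq> 2 * k\<close> half_of_int_diff_eq_0_iff by blast
  ultimately show ?thesis
    using mult_left_cancel by blast
qed

lemma rho3_L: "\<rho>3 (bas (L m)) = 0"
  using decomposition_L_Y_at_Y[where m = m and j = n and n = n]
  by (cases "m = 0") (simp_all add: psi_Y_at_Y)

lemma psi_Y_at_M: "k \<noteq> 0 \<Longrightarrow> \<psi> (bas (Y n)) (M k) = 0"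
  using decomposition_L_Y_at_M[where m = 0 and j = k and n = n] by simp

lemma theta1_Y: "\<theta>1 (bas (Y n)) = 0"
  using decomposition_L_Y_at_M[where m = 0 and j = 0 and n = n] by simp

lemma theta2_Y: "\<theta>2 (bas (Y n)) = 0"
  using decomposition_L_Y_at_M[where m = 1 and j = 1 and n = n] by (simp add: theta1_Y)

lemma psi_Y:
  "\<psi> (bas (Y n)) = vadd (vsc lam (bas (Y n))) (vsc (\<psi> (bas (Y n)) (M 0)) (bas (M 0)))"
proof
  fix g
  show "\<psi> (bas (Y n)) g = vadd (vsc lam (bas (Y n))) (vsc (\<psi> (bas (Y n)) (M 0)) (bas (M 0))) g"
    by (cases g) (auto simp: vadd_def vsc_def bas_apply psi_Y_at_L psi_Y_at_Y psi_Y_at_M)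
qed

end

context
  fixes lam :: complex
  assumes psi_L_L: "\<And>m k. \<psi> (bas (L m)) (L k) = (if k = m then lam else 0)"
    and psi_L_Y: "\<And>m k. \<psi> (bas (L m)) (Y k) = 0"
begin

lemma phi_Y_rho_Y_theta3_L:
  shows phi_Y: "\<phi> (bas (Y n)) = vadd (vsc lam (bas (Y n))) (vsc (\<phi> (bas (Y n)) (M 0)) (bas (M 0)))"
    and rho1_Y: "\<rho>1 (bas (Y n)) = 0"
    and rho2_Y: "\<rho>2 (bas (Y n)) = 0"
    and theta3_L: "\<theta>3 (bas (L n)) = 0"
proof -
  interpret swapped: two_sided_decomposition "\<lambda>x. vsc (- 1) (\<psi> x)" "\<lambda>y. vsc (- 1) (\<phi> y)"
    \<theta>1 \<theta>2 \<theta>3 \<rho>1 \<rho>2 \<rho>3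
    by (rule swap)
  have neg_psi_L_L: "vsc (- 1) (\<psi> (bas (L m))) (L k) = (if k = m then - lam else 0)" for m k
    by (simp add: vsc_def psi_L_L)
  have neg_psi_L_Y: "vsc (- 1) (\<psi> (bas (L m))) (Y k) = 0" for m k
    by (simp add: vsc_def psi_L_Y)
  note swapped_facts = swapped.psi_Y swapped.theta1_Y swapped.theta2_Y swapped.rho3_L
  show "\<rho>1 (bas (Y n)) = 0" "\<rho>2 (bas (Y n)) = 0" "\<theta>3 (bas (L n)) = 0"
    using swapped_facts(2-4)[OF neg_psi_L_L neg_psi_L_Y] by simp_all
  show "\<phi> (bas (Y n)) = vadd (vsc lam (bas (Y n))) (vsc (\<phi> (bas (Y n)) (M 0)) (bas (M 0)))"
  proof
    fix g
    show "\<phi> (bas (Y n)) g = vadd (vsc lam (bas (Y n))) (vsc (\<phi> (bas (Y n)) (M 0)) (bas (M 0))) g"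
      using fun_cong[OF swapped_facts(1)[OF neg_psi_L_L neg_psi_L_Y, of n], of g]
      by (simp add: vadd_def vsc_def algebra_simps)
  qed
qed

end

lemma rho3_theta3_Y:
  assumes "\<And>m k. \<phi> (bas (Y m)) (L k) = 0" "\<And>m k. \<psi> (bas (Y m)) (L k) = 0"
  shows "\<rho>3 (bas (Y n)) = 0" "\<theta>3 (bas (Y n)) = 0"
  using decomposition[of "bas (Y n)" "bas (Y (n + 1))" "Y (n + 1)"]
    decomposition[of "bas (Y (n + 1))" "bas (Y n)" "Y (n + 1)"]
  by (simp_all add: D_bas_apply br_bas_apply phi_SV psi_SV assms)

end

lemma L_shift_in_Mfrak_components:
  assumes "vadd u (vsc (- c) (bas (L m))) \<in> Mfrak"
  shows "u (L k) = (if k = m then c else 0)" "u (Y k) = 0"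
  using assms by (auto simp: Mfrak_def vadd_def vsc_def bas_apply)

theorem lemma3p3:
  fixes f :: "sv \<Rightarrow> sv \<Rightarrow> sv" and \<phi> \<psi> :: "sv \<Rightarrow> sv"
    and \<rho>1 \<rho>2 \<rho>3 \<theta>1 \<theta>2 \<theta>3 :: "sv \<Rightarrow> complex" and lam :: complex
  assumes bider: "biderivation f"
    and lin: "lin_map \<phi>" "lin_map \<psi>"
    and linf: "lin_fun \<rho>1" "lin_fun \<rho>2" "lin_fun \<rho>3"
              "lin_fun \<theta>1" "lin_fun \<theta>2" "lin_fun \<theta>3"
    and eq1: "\<forall>x\<in>SV. \<forall>y\<in>SV. f x y =
        vadd (vadd (vadd (vsc (\<rho>1 x) (D1 y)) (vsc (\<rho>2 x) (D2 y))) (vsc (\<rho>3 x) (D3 y)))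
             (br (\<phi> x) y)"
    and eq2: "\<forall>x\<in>SV. \<forall>y\<in>SV. f x y =
        vadd (vadd (vadd (vsc (\<theta>1 y) (D1 x)) (vsc (\<theta>2 y) (D2 x))) (vsc (\<theta>3 y) (D3 x)))
             (br x (\<psi> y))"
    and lamh: "\<forall>m. vadd (\<phi> (bas (L m))) (vsc (- lam) (bas (L m))) \<in> Mfrak"
             "\<forall>m. vadd (\<psi> (bas (L m))) (vsc (- lam) (bas (L m))) \<in> Mfrak"
  shows "\<forall>n. (\<exists>c0 r0.
            \<phi> (bas (Y n)) = vadd (vsc lam (bas (Y n))) (vsc c0 (bas (M 0))) \<and>
            \<psi> (bas (Y n)) = vadd (vsc lam (bas (Y n))) (vsc r0 (bas (M 0)))) \<and>
          \<rho>1 (bas (Y n)) = 0 \<and> \<rho>2 (bas (Y n)) = 0 \<and> \<rho>3 (bas (Y n)) = 0 \<and>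
          \<theta>1 (bas (Y n)) = 0 \<and> \<theta>2 (bas (Y n)) = 0 \<and> \<theta>3 (bas (Y n)) = 0 \<and>
          \<rho>3 (bas (L n)) = 0 \<and> \<theta>3 (bas (L n)) = 0"
proof -
  interpret two_sided_decomposition \<phi> \<psi> \<rho>1 \<rho>2 \<rho>3 \<theta>1 \<theta>2 \<theta>3
  proof
    show "\<phi> x \<in> SV" "\<psi> x \<in> SV" if "x \<in> SV" for x
      using lin that by (simp_all add: lin_map_def)
    show "\<rho>1 x * D1 y g + \<rho>2 x * D2 y g + \<rho>3 x * D3 y g + br (\<phi> x) y g =
        \<theta>1 y * D1 x g + \<theta>2 y * D2 x g + \<theta>3 y * D3 x g + br x (\<psi> y) g"
      if "x \<in> SV" "y \<in> SV" for x y g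
      using fun_cong[OF eq1[rule_format, OF that], of g] fun_cong[OF eq2[rule_format, OF that], of g]
      by (simp add: vadd_def vsc_def)
  qed
  note phi_L = L_shift_in_Mfrak_components[OF lamh(1)[rule_format]]
  note psi_L = L_shift_in_Mfrak_components[OF lamh(2)[rule_format]]
  have phi_Y_L: "\<phi> (bas (Y m)) (L k) = 0" for m k
    by (subst phi_Y[OF psi_L]) (simp add: vadd_def vsc_def bas_apply)
  show ?thesis
    using phi_Y[OF psi_L] psi_Y[OF phi_L] rho1_Y[OF psi_L] rho2_Y[OF psi_L] theta3_L[OF psi_L]
      theta1_Y[OF phi_L] theta2_Y[OF phi_L] rho3_L[OF phi_L] rho3_theta3_Y[OF phi_Y_L psi_Y_at_L[OF phi_L]]
    by blast
qed

end
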